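(* Let $p$ be an odd prime and $t$ a positive integer, and let $n$ be a positive integer dividing $p^t+1$ such that $\frac{p^t+1}{n}$ is odd. Let $\eta$ be a root of an irreducible quadratic polynomial over $\mathbb{F}_p$. Let $S\subseteq\mathbb{F}_p^n\times\mathbb{F}_p^n$ be a totally isotropic, simultaneously negacyclic subspace whose image under $(\mathbf{a},\mathbf{b})\mapsto\mathbf{a}+\eta\mathbf{b}$ is an ideal of $\mathbb{F}_p(\eta)[X]/\langle X^n+1\rangle$. Let $g(X)$ be the monic generator (dividing $X^n+1$) of the ideal $F=\{\mathbf{a}:(\mathbf{a},\mathbf{b})\in S\}$ of $\mathcal{R}=\mathbb{F}_p[X]/\langle X^n+1\rangle$. If $g(-X)=g(X)$, then $S$ is uniquely negacyclic.
   Context: Vectors $(a_0,\dots,a_{n-1})$ over a field are identified with polynomials $\sum a_iX^i$ modulo $X^n+1$. $N:\mathbb{F}_p^n\to\mathbb{F}_p^n$ is $(u_0,\dots,u_{n-1})\mapsto(-u_{n-1},u_0,\dots,u_{n-2})$; $S$ is simultaneously negacyclic if $(\mathbf{a},\mathbf{b})\in S$ implies $(N\mathbf{a},N\mathbf{b})\in S$. The symplectic inner product is $\langle(\mathbf{a},\mathbf{b}),(\mathbf{c},\mathbf{d})\rangle_s=\mathbf{a}^T\mathbf{d}-\mathbf{b}^T\mathbf{c}$ and $S$ is totally isotropic if it vanishes on $S\times S$. $S$ is uniquely negacyclic if there is a unique $f\in\mathcal{R}$ with $(g,f)\in S$. *)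

theory Defs
  imports "HOL-Computational_Algebra.Polynomial" "HOL-Library.Cardinality"
begin

text \<open>Vectors (a_0,...,a_{n-1}) over a field are represented as polynomials of degree < n.\<close>

definition vecs :: "nat \<Rightarrow> 'a::zero poly set" where
  "vecs n = {a. degree a < n}"

definition negmod :: "nat \<Rightarrow> 'a::comm_ring_1 poly" where
  "negmod n = monom 1 n + 1"

definition negashift :: "nat \<Rightarrow> 'a::comm_ring_1 poly \<Rightarrow> 'a poly" where
  "negashift n u = (\<Sum>i<n. monom (if i = 0 then - coeff u (n - 1) else coeff u (i - 1)) i)"

definition dotp :: "nat \<Rightarrow> 'a::comm_ring_1 poly \<Rightarrow> 'a poly \<Rightarrow> 'a" where
  "dotp n a b = (\<Sum>i<n. coeff a i * coeff b i)"

definition symp :: "nat \<Rightarrow> 'a::comm_ring_1 poly \<times> 'a poly \<Rightarrow> 'a poly \<times> 'a poly \<Rightarrow> 'a" where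
  "symp n u v = dotp n (fst u) (snd v) - dotp n (snd u) (fst v)"

definition is_subspace :: "nat \<Rightarrow> ('a::field poly \<times> 'a poly) set \<Rightarrow> bool" where
  "is_subspace n S \<longleftrightarrow> S \<subseteq> vecs n \<times> vecs n \<and> (0, 0) \<in> S \<and>
     (\<forall>u\<in>S. \<forall>v\<in>S. (fst u + fst v, snd u + snd v) \<in> S) \<and>
     (\<forall>c. \<forall>u\<in>S. (smult c (fst u), smult c (snd u)) \<in> S)"

definition simult_negacyclic :: "nat \<Rightarrow> ('a::comm_ring_1 poly \<times> 'a poly) set \<Rightarrow> bool" where
  "simult_negacyclic n S \<longleftrightarrow> (\<forall>a b. (a, b) \<in> S \<longrightarrow> (negashift n a, negashift n b) \<in> S)"

definition totally_isotropic :: "nat \<Rightarrow> ('a::comm_ring_1 poly \<times> 'a poly) set \<Rightarrow> bool" where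
  "totally_isotropic n S \<longleftrightarrow> (\<forall>u\<in>S. \<forall>v\<in>S. symp n u v = 0)"

text \<open>I (a set of representatives of degree < n) is an ideal of K[X]/<X^n+1>.\<close>
definition quot_ideal :: "nat \<Rightarrow> 'a::field poly set \<Rightarrow> bool" where
  "quot_ideal n I \<longleftrightarrow> I \<subseteq> vecs n \<and> 0 \<in> I \<and> (\<forall>x\<in>I. \<forall>y\<in>I. x + y \<in> I) \<and>
     (\<forall>r. \<forall>x\<in>I. (r * x) mod negmod n \<in> I)"

definition uniquely_negacyclic :: "nat \<Rightarrow> ('a::field poly \<times> 'a poly) set \<Rightarrow> 'a poly \<Rightarrow> bool" where
  "uniquely_negacyclic n S g \<longleftrightarrow> (\<exists>!f. f \<in> vecs n \<and> (g mod negmod n, f) \<in> S)"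

end

theory Submission
  imports Defs "HOL-Number_Theory.Cong" "HOL-Computational_Algebra.Primes"
begin

(* Let (0, d) \<in> S. Multiplying the element \<eta> d of the ideal by \<eta> and using the quadratic
   relation of \<eta> shows that d is a scalar multiple of a first component, so d = u g modulo
   X^n + 1; total isotropy makes d orthogonal to all negacyclic shifts of g, i.e. X^n + 1 divides
   g rev(d). With N = p^t we have X^(N+1) = -1, so reversal is d \<mapsto> X^(n-1) d(-X^N), and the
   Frobenius map together with g(-X) = g turns this into (g u(-X))^(N+1) = 0. Since
   w^(N^2) = w for every w, the nilpotent element g u(-X) vanishes, hence d = u g = 0, and the
   first component of an element of S determines the second. *)

section \<open>Fields of prime order\<close>

lemma of_nat_CARD_eq_0: "of_nat CARD('a) = (0 :: 'a :: {ring_1, finite})"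
proof -
  have "(\<Sum>x\<in>(UNIV :: 'a set). x) = (\<Sum>x\<in>UNIV. x + 1)"
    by (rule sum.reindex_bij_witness[of _ "\<lambda>y. y + 1" "\<lambda>y. y - 1"]) auto
  also have "\<dots> = (\<Sum>x\<in>UNIV. x) + of_nat CARD('a)"
    by (simp add: sum.distrib)
  finally show ?thesis by simp
qed

lemma CHAR_eq_CARD:
  assumes "prime CARD('a :: {idom, finite})"
  shows "CHAR('a) = CARD('a)"
proof (rule primes_dvd_imp_eq)
  show "prime CHAR('a)"
    by (intro prime_CHAR_semidom finite_imp_CHAR_pos) simp
  show "CHAR('a) dvd CARD('a)"
    using of_nat_CARD_eq_0 of_nat_eq_0_iff_char_dvd by blast
qed fact

lemma range_of_nat_eq_UNIV:
  assumes "prime CARD('a :: {idom, finite})"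
  shows "range (of_nat :: nat \<Rightarrow> 'a) = UNIV"
proof -
  have "inj_on (of_nat :: nat \<Rightarrow> 'a) {..<CARD('a)}"
    by (rule linorder_inj_onI')
      (auto simp: of_nat_eq_iff_char_dvd CHAR_eq_CARD[OF assms] dest: dvd_imp_le)
  then have "card (of_nat ` {..<CARD('a)} :: 'a set) = CARD('a)"
    by (simp add: card_image)
  then have "of_nat ` {..<CARD('a)} = (UNIV :: 'a set)"
    by (intro card_eq_UNIV_imp_eq_UNIV) simp_all
  then show ?thesis by blast
qed

lemma power_CARD_power_eq_self:
  assumes "prime CARD('a :: {idom, finite})"
  shows "x ^ (CARD('a) ^ k) = (x :: 'a)"
proof -
  obtain m where "x = of_nat m"
    using range_of_nat_eq_UNIV[OF assms] by (metis UNIV_I imageE)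
  moreover have "(of_nat m :: 'a) ^ (CARD('a) ^ k) = of_nat m"
  proof (induction m)
    case (Suc m)
    then show ?case
      using freshmans_dream'[of "CARD('a) ^ k" k "of_nat m :: 'a" 1] assms
      by (simp add: CHAR_eq_CARD add.commute)
  qed simp
  ultimately show ?thesis by simp
qed

lemma pcompose_monom: "monom c k \<circ>\<^sub>p q = smult c (q ^ k)"
  by (induction k) (simp_all add: monom_Suc pcompose_pCons monom_0)

lemma power_CARD_power_eq_pcompose:
  fixes a :: "'a :: {field, finite} poly"
  assumes "prime CARD('a)"
  shows "a ^ (CARD('a) ^ k) = a \<circ>\<^sub>p monom 1 (CARD('a) ^ k)"
proof (induction a)
  case (pCons c a)
  have "pCons c a = [:c:] + monom 1 1 * a"
    by (simp add: poly_eq_iff coeff_monom_mult coeff_pCons split: nat.split)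
  then have "pCons c a ^ (CARD('a) ^ k) = [:c:] ^ (CARD('a) ^ k) + (monom 1 1 * a) ^ (CARD('a) ^ k)"
    using freshmans_dream'[of "CARD('a) ^ k" k "[:c:]"] assms by (simp add: CHAR_eq_CARD)
  also have "[:c:] ^ (CARD('a) ^ k) = [:c:]"
    by (simp add: power_CARD_power_eq_self[OF assms] poly_const_pow)
  also have "(monom 1 1 * a) ^ (CARD('a) ^ k) = monom 1 (CARD('a) ^ k) * (a \<circ>\<^sub>p monom 1 (CARD('a) ^ k))"
    by (simp add: power_mult_distrib monom_power pCons.IH)
  finally show ?case by (simp add: pcompose_pCons)
qed simp

section \<open>Polynomials modulo \<open>X\<^sup>n + 1\<close>\<close>

lemma degree_negmod: "n > 0 \<Longrightarrow> degree (negmod n :: 'a :: comm_ring_1 poly) = n"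
  by (simp add: negmod_def degree_add_eq_left degree_monom_eq)

lemma negmod_nonzero: "n > 0 \<Longrightarrow> negmod n \<noteq> (0 :: 'a :: comm_ring_1 poly)"
  by (metis degree_0 degree_negmod less_not_refl2)

lemma monom_cong_neg_one: "[monom 1 n = -1] (mod (negmod n :: 'a :: field poly))"
  by (simp add: cong_iff_dvd_diff negmod_def)

lemma monom_mult_cong_neg_one:
  assumes "odd m"
  shows "[monom 1 (n * m) = -1] (mod (negmod n :: 'a :: field poly))"
proof -
  have "[monom 1 n ^ m = (-1) ^ m] (mod (negmod n :: 'a poly))"
    by (intro cong_pow monom_cong_neg_one)
  then show ?thesis
    using assms by (simp add: monom_power)
qed

lemma pcompose_cong:
  fixes m :: "'a :: field poly"
  assumes "[s = s'] (mod m)"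
  shows "[a \<circ>\<^sub>p s = a \<circ>\<^sub>p s'] (mod m)"
  by (induction a) (simp_all add: pcompose_pCons cong_add cong_mult assms)

text \<open>Substituting for \<open>X\<close> a root \<open>s\<close> of \<open>X\<^sup>n + 1\<close> is a ring endomorphism of
  \<open>K[X]/\<langle>X\<^sup>n + 1\<rangle>\<close>.\<close>
lemma pcompose_cong_negmod:
  fixes s :: "'a :: field poly"
  assumes "[s ^ n = -1] (mod negmod n)" and "[a = b] (mod negmod n)"
  shows "[a \<circ>\<^sub>p s = b \<circ>\<^sub>p s] (mod negmod n)"
proof -
  have "negmod n \<circ>\<^sub>p s = s ^ n + 1"
    by (simp add: negmod_def pcompose_add pcompose_monom pcompose_1)
  also have "[\<dots> = -1 + 1] (mod negmod n)"
    using assms(1) by (rule cong_add) simp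
  finally have "negmod n dvd negmod n \<circ>\<^sub>p s"
    by (simp add: cong_0_iff)
  moreover obtain w where "a - b = negmod n * w"
    using assms(2) by (metis cong_iff_dvd_diff dvdE)
  then have "a \<circ>\<^sub>p s - b \<circ>\<^sub>p s = (negmod n \<circ>\<^sub>p s) * (w \<circ>\<^sub>p s)"
    by (metis pcompose_diff pcompose_mult)
  ultimately show ?thesis
    by (simp add: cong_iff_dvd_diff)
qed

lemma neg_X_power_cong_neg_one:
  assumes "even n"
  shows "[[:0, -1:] ^ n = -1] (mod (negmod n :: 'a :: field poly))"
proof -
  have "[:0, -1 :: 'a:] = - [:0, 1:]"
    by simp
  then have "[:0, -1 :: 'a:] ^ n = [:0, 1:] ^ n"
    using assms by (metis power_minus_even)
  then have "[:0, -1 :: 'a:] ^ n = monom 1 n"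
    by (simp add: monom_altdef)
  then show ?thesis
    using monom_cong_neg_one by simp
qed

lemma eq_0_if_negmod_dvd:
  assumes "negmod n dvd d" and "degree d < n"
  shows "d = (0 :: 'a :: field poly)"
  using assms by (metis degree_negmod dvd_imp_degree_le gr_implies_not0 linorder_not_le neq0_conv)

section \<open>Reversal and the dot product\<close>

definition rev_coeffs :: "nat \<Rightarrow> 'a :: comm_ring_1 poly \<Rightarrow> 'a poly" where
  "rev_coeffs n d = (\<Sum>j<n. monom (coeff d (n - 1 - j)) j)"

lemma coeff_rev_coeffs: "coeff (rev_coeffs n d) k = (if k < n then coeff d (n - 1 - k) else 0)"
  by (simp add: rev_coeffs_def coeff_sum coeff_monom)

lemma degree_rev_coeffs: "n > 0 \<Longrightarrow> degree (rev_coeffs n d) \<le> n - 1"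
  by (rule degree_le) (auto simp: coeff_rev_coeffs)

lemma dotp_eq_coeff_mult_rev_coeffs:
  assumes "n > 0"
  shows "dotp n a d = coeff (a * rev_coeffs n d) (n - 1)"
proof -
  have "coeff (a * rev_coeffs n d) (n - 1) = (\<Sum>i\<le>n - 1. coeff a i * coeff (rev_coeffs n d) (n - 1 - i))"
    by (simp add: coeff_mult)
  also have "\<dots> = (\<Sum>i<n. coeff a i * coeff d i)"
    using assms by (intro sum.cong) (auto simp: coeff_rev_coeffs)
  finally show ?thesis
    by (simp add: dotp_def)
qed

text \<open>A multiple \<open>(X\<^sup>n + 1) w\<close> of degree at most \<open>2n - 2\<close> has \<open>deg w < n - 1\<close>,
  hence no term \<open>X\<^sup>n\<^sup>-\<^sup>1\<close>.\<close>
lemma coeff_eq_if_cong_negmod: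
  fixes u v :: "'a :: field poly"
  assumes "n > 0" "degree u \<le> 2 * n - 2" "degree v \<le> 2 * n - 2" "[u = v] (mod negmod n)"
  shows "coeff u (n - 1) = coeff v (n - 1)"
proof -
  obtain w where w: "u - v = negmod n * w"
    using assms(4) by (metis cong_iff_dvd_diff dvdE)
  have "coeff w (n - 1) = 0"
  proof (cases "w = 0")
    case False
    then have "degree (u - v) = n + degree w"
      using w degree_mult_eq[OF negmod_nonzero[OF assms(1)] False] assms(1) by (simp add: degree_negmod)
    moreover have "degree (u - v) \<le> 2 * n - 2"
      using assms(2,3) degree_diff_le by blast
    ultimately show ?thesis
      using assms(1) by (simp add: coeff_eq_0)
  qed simp
  then have "coeff (u - v) (n - 1) = 0"
    using assms(1) by (simp add: w negmod_def distrib_right coeff_monom_mult)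
  then show ?thesis
    by simp
qed

text \<open>The dot product with all negacyclic shifts \<open>g X\<^sup>k\<close> is read off the product
  \<open>g \<cdot> rev d\<close>: its residue has coefficient \<open>\<langle>g X\<^sup>n\<^sup>-\<^sup>1\<^sup>-\<^sup>j, d\<rangle>\<close> at \<open>X\<^sup>j\<close>.\<close>
lemma negmod_dvd_mult_rev_coeffs:
  fixes g d :: "'a :: field poly"
  assumes n: "n > 0"
    and orth: "\<And>k. k < n \<Longrightarrow> dotp n ((g * monom 1 k) mod negmod n) d = 0"
  shows "negmod n dvd g * rev_coeffs n d"
proof -
  define M :: "'a poly" where "M = negmod n"
  have M: "degree M = n" "M \<noteq> 0"
    using n by (simp_all add: M_def degree_negmod negmod_nonzero)
  define c where "c = (g * rev_coeffs n d) mod M"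
  have dc: "degree c \<le> n - 1"
    using degree_mod_less[OF M(2), of "g * rev_coeffs n d"] M n by (auto simp: c_def)
  have "coeff c j = 0" if j: "j < n" for j
  proof -
    define k where "k = n - 1 - j"
    define a where "a = (g * monom 1 k) mod M"
    have da: "degree a \<le> n - 1"
      using degree_mod_less[OF M(2), of "g * monom 1 k"] M n by (auto simp: a_def)
    have "0 = coeff (a * rev_coeffs n d) (n - 1)"
      using orth[of k] n by (simp add: k_def a_def M_def dotp_eq_coeff_mult_rev_coeffs)
    also have "\<dots> = coeff (monom 1 k * c) (n - 1)"
    proof (rule coeff_eq_if_cong_negmod[OF n])
      show "degree (a * rev_coeffs n d) \<le> 2 * n - 2"
        using degree_mult_le[of a "rev_coeffs n d"] da degree_rev_coeffs[OF n, of d] by linarith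
      have "degree (monom 1 k * c) \<le> k + (n - 1)"
        using degree_mult_le[of "monom 1 k" c] degree_monom_le[of 1 k] dc by (meson add_mono order_trans)
      then show "degree (monom 1 k * c) \<le> 2 * n - 2"
        by (simp add: k_def)
      have "[a * rev_coeffs n d = g * monom 1 k * rev_coeffs n d] (mod M)"
        unfolding a_def by (intro cong_scalar_right) (simp add: cong_def)
      also have "g * monom 1 k * rev_coeffs n d = monom 1 k * (g * rev_coeffs n d)"
        by (simp add: mult_ac)
      also have "[\<dots> = monom 1 k * c] (mod M)"
        unfolding c_def by (intro cong_scalar_left) (simp add: cong_def)
      finally show "[a * rev_coeffs n d = monom 1 k * c] (mod negmod n)"
        by (simp add: M_def)
    qed
    also have "\<dots> = coeff c j"
      using j by (simp add: k_def coeff_monom_mult)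
    finally show ?thesis
      by simp
  qed
  moreover have "coeff c j = 0" if "j \<ge> n" for j
    using dc n that by (simp add: coeff_eq_0)
  ultimately have "c = 0"
    by (metis leI poly_eqI coeff_0)
  then show ?thesis
    by (simp add: c_def M_def mod_eq_0_iff_dvd)
qed

lemma rev_coeffs_cong_pcompose:
  fixes d s :: "'a :: field poly"
  assumes n: "n > 0" and dv: "degree d < n" and Xs: "[monom 1 1 * s = 1] (mod negmod n)"
  shows "[rev_coeffs n d = monom 1 (n - 1) * (d \<circ>\<^sub>p s)] (mod negmod n)"
proof -
  have d: "d = (\<Sum>i<n. monom (coeff d i) i)"
    using poly_as_sum_of_monoms'[of d "n - 1"] dv n by (simp add: lessThan_Suc_atMost[symmetric])
  have "monom 1 (n - 1) * (d \<circ>\<^sub>p s) = monom 1 (n - 1) * ((\<Sum>i<n. monom (coeff d i) i) \<circ>\<^sub>p s)"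
    by (rule arg_cong[OF d])
  also have "\<dots> = (\<Sum>i<n. smult (coeff d i) (monom 1 (n - 1) * s ^ i))"
    by (simp add: pcompose_sum pcompose_monom sum_distrib_left)
  also have "[\<dots> = (\<Sum>i<n. monom (coeff d i) (n - 1 - i))] (mod negmod n)"
  proof (rule cong_sum)
    fix i assume "i \<in> {..<n}"
    then have "monom 1 (n - 1) * s ^ i = monom 1 (n - 1 - i) * (monom 1 1 * s) ^ i"
      by (simp add: power_mult_distrib monom_power mult_monom flip: mult.assoc)
    also have "[\<dots> = monom 1 (n - 1 - i) * 1 ^ i] (mod negmod n)"
      by (intro cong_mult cong_pow Xs cong_refl)
    finally have "[monom 1 (n - 1) * s ^ i = monom 1 (n - 1 - i)] (mod negmod n)"
      by simp
    from cong_scalar_left[OF this, of "[:coeff d i:]"]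
    show "[smult (coeff d i) (monom 1 (n - 1) * s ^ i) = monom (coeff d i) (n - 1 - i)] (mod negmod n)"
      by (simp add: smult_monom)
  qed
  also have "(\<Sum>i<n. monom (coeff d i) (n - 1 - i)) = rev_coeffs n d"
    unfolding rev_coeffs_def
    by (rule sum.reindex_bij_witness[of _ "\<lambda>j. n - 1 - j" "\<lambda>i. n - 1 - i"]) auto
  finally show ?thesis
    by (rule cong_sym)
qed

section \<open>The quadratic extension\<close>

lemma poly_neq_0_if_irreducible_degree_2:
  fixes q :: "'a :: field poly"
  assumes "irreducible q" "degree q = 2"
  shows "poly q r \<noteq> 0"
proof
  assume "poly q r = 0"
  then obtain k where k: "q = [:-r, 1:] * k"
    by (metis poly_eq_0_iff_dvd dvdE)
  with assms have "k \<noteq> 0"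
    by auto
  with k have "degree q = degree [:-r, 1:] + degree k"
    by (metis degree_mult_eq pCons_eq_0_iff one_neq_zero)
  with assms(2) have "degree k = 1"
    by simp
  moreover have "is_unit [:-r, 1:] \<or> is_unit k"
    using assms(1) k irreducibleD by blast
  ultimately show False
    using \<open>k \<noteq> 0\<close> by (auto simp: is_unit_iff_degree)
qed

locale field_embedding =
  fixes \<iota> :: "'a :: field \<Rightarrow> 'e :: field"
  assumes add: "\<iota> (x + y) = \<iota> x + \<iota> y" and mult: "\<iota> (x * y) = \<iota> x * \<iota> y"
    and inj: "inj \<iota>"
begin

lemma zero [simp]: "\<iota> 0 = 0"
  using add[of 0 0] by (metis add_cancel_right_right)

lemma uminus: "\<iota> (- x) = - \<iota> x"
  using add[of x "- x"] by (simp add: add.commute eq_neg_iff_add_eq_0)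

lemma eq_0_iff [simp]: "\<iota> x = 0 \<longleftrightarrow> x = 0"
  using inj zero by (metis injD)

lemma divide: "\<iota> (x / y) = \<iota> x / \<iota> y"
proof (cases "y = 0")
  case False
  then have "\<iota> (x / y) * \<iota> y = \<iota> x"
    by (simp flip: mult)
  with False show ?thesis
    by (simp add: eq_divide_eq)
qed simp

lemma poly_map_poly: "poly (map_poly \<iota> q) (\<iota> r) = \<iota> (poly q r)"
  by (induction q) (simp_all add: map_poly_pCons add mult)

text \<open>\<open>\<eta>\<close> is not in the image of \<open>\<iota>\<close>, since \<open>q\<close> has no roots.\<close>
lemma eq_0_if_iota_add_eta_eq_0:
  assumes "irreducible q" "degree q = 2" "poly (map_poly \<iota> q) \<eta> = 0"
    and "\<iota> x + \<eta> * \<iota> y = 0"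
  shows "x = 0 \<and> y = 0"
proof (cases "y = 0")
  case False
  then have "\<eta> = \<iota> (- x / y)"
    using assms(4) by (simp add: divide uminus field_simps add_eq_0_iff)
  then have "\<iota> (poly q (- x / y)) = 0"
    using assms(3) by (simp add: poly_map_poly)
  then show ?thesis
    using poly_neq_0_if_irreducible_degree_2[OF assms(1,2)] by simp
qed (use assms(4) in simp)

text \<open>Multiplying by the constant \<open>\<eta>\<^sup>2 = -(q\<^sub>0 + q\<^sub>1 \<eta>)/q\<^sub>2\<close> in the ideal sends
  \<open>\<eta> d\<close> to an element whose rational part is \<open>-(q\<^sub>0/q\<^sub>2) d\<close>.\<close>
lemma snd_eq_smult_fst_if_fst_eq_0:
  fixes S :: "('a poly \<times> 'a poly) set"
  assumes irr: "irreducible q" and dq: "degree q = 2" and root: "poly (map_poly \<iota> q) \<eta> = 0"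
    and sub: "is_subspace n S"
    and ideal: "quot_ideal n ((\<lambda>(a, b). map_poly \<iota> a + smult \<eta> (map_poly \<iota> b)) ` S)"
    and d: "(0, d) \<in> S"
  obtains a b c where "(a, b) \<in> S" and "d = smult c a"
proof -
  let ?C = "(\<lambda>(a, b). map_poly \<iota> a + smult \<eta> (map_poly \<iota> b)) ` S"
  have dv: "degree d < n"
    using sub d by (auto simp: is_subspace_def vecs_def)
  have "smult \<eta> (map_poly \<iota> d) \<in> ?C"
    using d by (force simp: image_iff)
  then have "([:\<eta>:] * smult \<eta> (map_poly \<iota> d)) mod negmod n \<in> ?C"
    using ideal unfolding quot_ideal_def by blast
  moreover have "degree (smult (\<eta> * \<eta>) (map_poly \<iota> d)) < degree (negmod n :: 'e poly)"
    using dv degree_smult_le[of "\<eta> * \<eta>" "map_poly \<iota> d"]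
    by (simp add: degree_map_poly degree_negmod)
  ultimately have "smult (\<eta> * \<eta>) (map_poly \<iota> d) \<in> ?C"
    by (simp add: mod_poly_less)
  then obtain a b where ab: "(a, b) \<in> S"
    and eq: "map_poly \<iota> a + smult \<eta> (map_poly \<iota> b) = smult (\<eta> * \<eta>) (map_poly \<iota> d)"
    by auto
  define q0 q1 q2 where "q0 = coeff q 0" and "q1 = coeff q 1" and "q2 = coeff q 2"
  have q2: "q2 \<noteq> 0"
    using dq by (metis q2_def leading_coeff_0_iff zero_neq_numeral degree_0)
  have q0: "q0 \<noteq> 0"
    using poly_neq_0_if_irreducible_degree_2[OF irr dq, of 0] by (simp add: q0_def poly_0_coeff_0)
  have rel: "\<iota> q0 + \<iota> q1 * \<eta> + \<iota> q2 * (\<eta> * \<eta>) = 0"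
    using root dq by (simp add: poly_altdef degree_map_poly coeff_map_poly q0_def q1_def q2_def
      numeral_2_eq_2 atMost_Suc power2_eq_square algebra_simps)
  have "q2 * coeff a i + q0 * coeff d i = 0" for i
  proof -
    have ci: "\<iota> (coeff a i) + \<eta> * \<iota> (coeff b i) = \<eta> * \<eta> * \<iota> (coeff d i)"
      using arg_cong[OF eq, of "\<lambda>p. coeff p i"] by (simp add: coeff_map_poly)
    have "\<iota> (q2 * coeff a i + q0 * coeff d i) + \<eta> * \<iota> (q2 * coeff b i + q1 * coeff d i)
        = \<iota> q2 * (\<iota> (coeff a i) + \<eta> * \<iota> (coeff b i)) + (\<iota> q0 + \<iota> q1 * \<eta>) * \<iota> (coeff d i)"
      by (simp add: add mult algebra_simps)
    also have "\<dots> = \<iota> (coeff d i) * (\<iota> q0 + \<iota> q1 * \<eta> + \<iota> q2 * (\<eta> * \<eta>))"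
      by (simp add: ci algebra_simps)
    also have "\<dots> = 0"
      using rel by simp
    finally show ?thesis
      using eq_0_if_iota_add_eta_eq_0[OF irr dq root] by blast
  qed
  then have "d = smult (- q2 / q0) a"
    using q0 q2 by (intro poly_eqI) (simp add: field_simps add_eq_0_iff)
  with ab that show ?thesis
    by blast
qed

end

section \<open>The kernel of the first projection\<close>

lemma dvd_if_dvd_power_and_power_cong_self:
  fixes w m :: "'a :: field poly"
  assumes "[w ^ k = w] (mod m)" and "m dvd w ^ j" and "j \<le> k"
  shows "m dvd w"
proof -
  have "m dvd w ^ k"
    using assms(2,3) by (metis le_add_diff_inverse power_add dvd_mult2)
  with assms(1) show ?thesis
    by (simp add: cong_dvd_iff)
qed

lemma negmod_dvd_power_if_orthogonal:
  fixes g d u :: "'a :: {field, finite} poly"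
  assumes prime: "prime CARD('a)" and N: "N = CARD('a) ^ t" and n: "n > 0"
    and X: "[monom 1 (N + 1) = -1] (mod (negmod n :: 'a poly))"
    and g_even: "g \<circ>\<^sub>p [:0, -1:] = g"
    and du: "[d = u * g] (mod negmod n)" and dv: "degree d < n"
    and orth: "\<And>k. k < n \<Longrightarrow> dotp n ((g * monom 1 k) mod negmod n) d = 0"
  shows "negmod n dvd (g * (u \<circ>\<^sub>p [:0, -1:])) ^ (N + 1)"
proof -
  define M :: "'a poly" where "M = negmod n"
  define w where "w = g * (u \<circ>\<^sub>p [:0, -1:])"
  define s :: "'a poly" where "s = [:0, -1:] \<circ>\<^sub>p monom 1 N"
  have Xs: "[monom 1 1 * s = 1] (mod M)"
  proof -
    have "monom 1 1 * s = - monom 1 (N + 1)"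
      by (simp add: s_def pcompose_pCons mult_monom)
    also have "[\<dots> = - (- 1)] (mod M)"
      using cong_uminus[OF X] by (simp add: M_def)
    finally show ?thesis
      by simp
  qed
  have sn: "[s ^ n = -1] (mod M)"
  proof -
    have "[- 1 * s ^ n = monom 1 n * s ^ n] (mod M)"
      unfolding M_def by (rule cong_scalar_right, rule cong_sym, rule monom_cong_neg_one)
    also have "monom 1 n * s ^ n = (monom 1 1 * s) ^ n"
      by (simp add: power_mult_distrib monom_power)
    also have "[\<dots> = 1 ^ n] (mod M)"
      using Xs by (rule cong_pow)
    finally have "[- 1 * s ^ n = 1] (mod M)"
      by simp
    from cong_uminus[OF this] show ?thesis
      by simp
  qed
  have frobenius: "a ^ N = a \<circ>\<^sub>p monom 1 N" for a :: "'a poly"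
    using power_CARD_power_eq_pcompose[OF prime] N by simp
  have ds: "[d \<circ>\<^sub>p s = w ^ N] (mod M)"
  proof -
    have "[d \<circ>\<^sub>p s = (u * g) \<circ>\<^sub>p s] (mod M)"
      using pcompose_cong_negmod[OF sn[unfolded M_def] du] by (simp add: M_def)
    also have "(u * g) \<circ>\<^sub>p s = w ^ N"
      by (simp add: s_def w_def pcompose_assoc frobenius pcompose_mult g_even mult.commute)
    finally show ?thesis .
  qed
  have rev: "[monom 1 (n - 1) * w ^ N = rev_coeffs n d] (mod M)"
  proof -
    have "[rev_coeffs n d = monom 1 (n - 1) * (d \<circ>\<^sub>p s)] (mod M)"
      using rev_coeffs_cong_pcompose[OF n dv Xs[unfolded M_def]] by (simp add: M_def)
    also have "[monom 1 (n - 1) * (d \<circ>\<^sub>p s) = monom 1 (n - 1) * w ^ N] (mod M)"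
      using ds by (rule cong_scalar_left)
    finally show ?thesis
      by (rule cong_sym)
  qed
  have "[w ^ (N + 1) = w ^ (N + 1) * (monom 1 1 * s) ^ (n - 1)] (mod M)"
    using cong_scalar_left[OF cong_pow[OF Xs, of "n - 1"], of "w ^ (N + 1)"] by (simp add: cong_sym)
  also have "w ^ (N + 1) * (monom 1 1 * s) ^ (n - 1)
      = g * (monom 1 (n - 1) * w ^ N) * ((u \<circ>\<^sub>p [:0, -1:]) * s ^ (n - 1))"
    by (simp add: w_def power_mult_distrib monom_power mult_ac)
  also have "[\<dots> = g * rev_coeffs n d * ((u \<circ>\<^sub>p [:0, -1:]) * s ^ (n - 1))] (mod M)"
    using rev by (intro cong_mult cong_refl)
  also have "[g * rev_coeffs n d * ((u \<circ>\<^sub>p [:0, -1:]) * s ^ (n - 1)) = 0] (mod M)"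
    using negmod_dvd_mult_rev_coeffs[OF n orth] by (simp add: M_def cong_0_iff)
  finally show ?thesis
    by (simp add: M_def w_def cong_0_iff)
qed

lemma monom_square_cong_monom_1:
  assumes "odd N" and "[monom 1 (N + 1) = -1] (mod (negmod n :: 'a :: field poly))"
  shows "[monom 1 (N * N) = monom 1 1] (mod (negmod n :: 'a poly))"
proof -
  obtain k where k: "N = Suc (2 * k)"
    using assms(1) oddE by (metis Suc_eq_plus1)
  have "monom (1 :: 'a) (N * N) = monom 1 1 * monom 1 (N + 1) ^ (2 * k)"
    by (simp add: k monom_power mult_monom algebra_simps)
  also have "[\<dots> = monom 1 1 * (- 1) ^ (2 * k)] (mod negmod n)"
    by (intro cong_scalar_left cong_pow assms(2))
  finally show ?thesis
    by simp
qed

lemma eq_0_if_orthogonal_multiple: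
  fixes g d u :: "'a :: {field, finite} poly"
  assumes prime: "prime CARD('a)" and N: "N = CARD('a) ^ t" "t > 0" "odd N"
    and n: "n > 0" "even n"
    and X: "[monom 1 (N + 1) = -1] (mod (negmod n :: 'a poly))"
    and g_even: "g \<circ>\<^sub>p [:0, -1:] = g"
    and du: "[d = u * g] (mod negmod n)" and dv: "degree d < n"
    and orth: "\<And>k. k < n \<Longrightarrow> dotp n ((g * monom 1 k) mod negmod n) d = 0"
  shows "d = 0"
proof -
  define M :: "'a poly" where "M = negmod n"
  define w where "w = g * (u \<circ>\<^sub>p [:0, -1:])"
  have "[w ^ (N * N) = w] (mod M)"
  proof -
    have "w ^ (N * N) = w \<circ>\<^sub>p monom 1 (N * N)"
      using power_CARD_power_eq_pcompose[OF prime, of w "t + t"] N by (simp add: power_add)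
    also have "[\<dots> = w \<circ>\<^sub>p monom 1 1] (mod M)"
      using pcompose_cong[OF monom_square_cong_monom_1[OF N(3) X]] by (simp add: M_def)
    finally show ?thesis
      by (simp add: monom_altdef)
  qed
  moreover have "M dvd w ^ (N + 1)"
    unfolding M_def w_def by (rule negmod_dvd_power_if_orthogonal[OF prime N(1) n(1) X g_even du dv orth])
  moreover have "N + 1 \<le> N * N"
  proof -
    have "2 \<le> CARD('a)"
      using prime by (simp add: prime_ge_2_nat)
    moreover have "CARD('a) \<le> N"
      using N(1,2) self_le_power[of "CARD('a)" t] by simp
    ultimately have "2 \<le> N"
      by (rule order_trans)
    moreover from this have "2 * N \<le> N * N"
      by (rule mult_le_mono1)
    ultimately show ?thesis
      by linarith
  qed
  ultimately have "M dvd w"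
    by (rule dvd_if_dvd_power_and_power_cong_self)
  then have "[w = 0] (mod negmod n)"
    by (simp add: M_def cong_0_iff)
  from pcompose_cong_negmod[OF neg_X_power_cong_neg_one[OF n(2)] this]
  have "[w \<circ>\<^sub>p [:0, -1:] = 0] (mod M)"
    by (simp add: M_def)
  moreover have "w \<circ>\<^sub>p [:0, -1:] = u * g"
    by (simp add: w_def pcompose_mult g_even pcompose_pCons mult.commute flip: pcompose_assoc)
  ultimately have "[d = 0] (mod M)"
    using du cong_trans unfolding M_def by metis
  then have "negmod n dvd d"
    by (simp add: M_def cong_0_iff)
  then show ?thesis
    using dv by (rule eq_0_if_negmod_dvd)
qed

lemma dotp_eq_0_if_fst_eq_0:
  assumes "totally_isotropic n S" and "(a, b) \<in> S" and "(0, d) \<in> S"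
  shows "dotp n a d = 0"
proof -
  have "symp n (a, b) (0, d) = 0"
    using assms unfolding totally_isotropic_def by blast
  then show ?thesis
    by (simp add: symp_def dotp_def)
qed

lemma uniquely_negacyclicI:
  assumes "is_subspace n S" and "(g mod negmod n, b) \<in> S"
    and "\<And>d. (0, d) \<in> S \<Longrightarrow> d = 0"
  shows "uniquely_negacyclic n S g"
proof -
  have add: "\<And>u v. u \<in> S \<Longrightarrow> v \<in> S \<Longrightarrow> (fst u + fst v, snd u + snd v) \<in> S"
    and smult: "\<And>c u. u \<in> S \<Longrightarrow> (smult c (fst u), smult c (snd u)) \<in> S"
    using assms(1) unfolding is_subspace_def by blast+
  have "f = f'" if "(g mod negmod n, f) \<in> S" and "(g mod negmod n, f') \<in> S" for f f'
  proof -
    have "(smult (-1) (g mod negmod n), smult (-1) f') \<in> S"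
      using smult[where c = "-1", OF that(2)] by simp
    from add[OF that(1) this] have "(0, f - f') \<in> S"
      by simp
    then show ?thesis
      using assms(3) by fastforce
  qed
  moreover have "b \<in> vecs n"
    using assms(1,2) by (auto simp: is_subspace_def)
  ultimately show ?thesis
    using assms(2) unfolding uniquely_negacyclic_def by blast
qed

lemma snd_eq_0_if_fst_eq_0:
  fixes S :: "('a :: {field, finite} poly \<times> 'a poly) set" and \<iota> :: "'a \<Rightarrow> 'e :: field"
  assumes "field_embedding \<iota>"
    and "irreducible q" and "degree q = 2" and "poly (map_poly \<iota> q) \<eta> = 0"
    and sub: "is_subspace n S" and iso: "totally_isotropic n S"
    and "quot_ideal n ((\<lambda>(a, b). map_poly \<iota> a + smult \<eta> (map_poly \<iota> b)) ` S)"
    and fst_S: "{a. \<exists>b. (a, b) \<in> S} = {f mod negmod n | f. g dvd f}"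
    and g_even: "g \<circ>\<^sub>p [:0, -1:] = g"
    and "prime CARD('a)" and "N = CARD('a) ^ t" and "t > 0" and "odd N" and "n > 0" and "even n"
    and "[monom 1 (N + 1) = -1] (mod (negmod n :: 'a poly))"
    and d: "(0, d) \<in> S"
  shows "d = 0"
proof -
  obtain a b c where "(a, b) \<in> S" and dc: "d = smult c a"
    using field_embedding.snd_eq_smult_fst_if_fst_eq_0[OF assms(1-5,7) d] .
  then have "a \<in> {f mod negmod n | f. g dvd f}"
    unfolding fst_S[symmetric] by blast
  then obtain v where "a = (g * v) mod negmod n"
    by (auto elim: dvdE)
  then have du: "[d = smult c v * g] (mod negmod n)"
    by (simp add: dc cong_def mod_smult_left mult.commute)
  have orth: "dotp n ((g * monom 1 k) mod negmod n) d = 0" for k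
  proof -
    have "(g * monom 1 k) mod negmod n \<in> {f mod negmod n | f. g dvd f}"
      by (blast intro: dvd_triv_left)
    then obtain b' where "((g * monom 1 k) mod negmod n, b') \<in> S"
      unfolding fst_S[symmetric] by blast
    then show ?thesis
      using dotp_eq_0_if_fst_eq_0[OF iso _ d] by blast
  qed
  have "degree d < n"
    using sub d by (auto simp: is_subspace_def vecs_def)
  then show "d = 0"
    using eq_0_if_orthogonal_multiple[OF assms(10-16) g_even du] orth by blast
qed

theorem mainTheorem7:
  fixes p t n :: nat
    and \<iota> :: "'a::{field,finite} \<Rightarrow> 'e::field"
    and q :: "'a poly" and \<eta> :: 'e
    and S :: "('a poly \<times> 'a poly) set"
    and g :: "'a poly"
  assumes "prime p" and "odd p" and "CARD('a) = p"
    and "t > 0" and "n > 0" and "n dvd p ^ t + 1" and "odd ((p ^ t + 1) div n)"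
    \<comment> \<open>'e is the field F_p(eta): iota embeds F_p, eta is a root of an irreducible quadratic q\<close>
    and "\<And>x y. \<iota> (x + y) = \<iota> x + \<iota> y" and "\<And>x y. \<iota> (x * y) = \<iota> x * \<iota> y"
    and "\<iota> 1 = 1" and "inj \<iota>"
    and "irreducible q" and "degree q = 2" and "poly (map_poly \<iota> q) \<eta> = 0"
    and "\<forall>z. \<exists>x y. z = \<iota> x + \<eta> * \<iota> y"
    and "is_subspace n S" and "totally_isotropic n S" and "simult_negacyclic n S"
    and "quot_ideal n ((\<lambda>(a, b). map_poly \<iota> a + smult \<eta> (map_poly \<iota> b)) ` S)"
    and "lead_coeff g = 1" and "g dvd negmod n"
    and "{a. \<exists>b. (a, b) \<in> S} = {f mod negmod n | f. g dvd f}"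
    and "g \<circ>\<^sub>p [:0, -1:] = g"
  shows "uniquely_negacyclic n S g"
proof -
  have emb: "field_embedding \<iota>"
    using assms(8,9,11) by unfold_locales
  have quotient: "p ^ t + 1 = n * ((p ^ t + 1) div n)"
    using assms(6) by simp
  moreover have "even (p ^ t + 1)"
    using assms(2) by simp
  ultimately have "even n"
    using assms(7) by (metis even_mult_iff)
  have X: "[monom 1 (p ^ t + 1) = -1] (mod (negmod n :: 'a poly))"
    by (subst quotient) (rule monom_mult_cong_neg_one[OF assms(7)])
  have "g mod negmod n \<in> {a. \<exists>b. (a, b) \<in> S}"
    unfolding assms(22) by auto
  then obtain b where "(g mod negmod n, b) \<in> S"
    by blast
  moreover have "d = 0" if "(0, d) \<in> S" for d
    using snd_eq_0_if_fst_eq_0[OF emb assms(12-14,16,17,19,22,23)] assms(1-5) \<open>even n\<close> X that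
    by simp
  ultimately show ?thesis
    by (rule uniquely_negacyclicI[OF assms(16)])
qed

end
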